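(* Let $\mu$ be a singular cardinal with $\aleph_0<\kappa=\operatorname{cf}(\mu)<\mu$ and $\lambda=\mu^+$. Let $\langle S_i:i<\kappa\rangle$ be pairwise disjoint stationary subsets of $\{\delta<\lambda:\operatorname{cf}(\delta)=\kappa\}$, and for each $i<\kappa$ let $\bar C^i=\langle C^i_\delta:\delta\in S_i\rangle$ be an $S_i$-club system such that $\lambda\notin\mathrm{id}_p(\bar C^i,\bar J^i)$, where $\bar J^i=\langle J^{b[\mu]}_{C^i_\delta}:\delta\in S_i\rangle$, and $\operatorname{otp}(C^i_\delta)=\kappa$ for every $\delta\in S_i$. Then there is a $\lambda$-club system $\bar e=\langle e_\beta:\beta<\lambda\text{ limit}\rangle$ such that $|e_\beta|\leq\operatorname{cf}(\beta)+\operatorname{cf}(\mu)$ for each $\beta$, and for every $i<\kappa$, every limit $\beta<\lambda$ and every $\delta\in S_i\cap(e_\beta\cup\{\beta\})$, we have $C^i_\delta\subseteq e_\beta$.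
   Context: An $S$-club system is a sequence $\langle C_\delta:\delta\in S\rangle$ with each $C_\delta$ a closed unbounded subset of $\delta$; a $\lambda$-club system is such a sequence indexed by all limit ordinals $\beta<\lambda$. $\operatorname{nacc}(C)$ denotes the non-accumulation points of $C$. $J^{b[\mu]}_{C_\delta}$ is the ideal of $A\subseteq C_\delta$ for which there exist a cardinal $\theta<\mu$ and $\gamma<\delta$ such that every $\beta\in A\cap\operatorname{nacc}(C_\delta)$ has $\beta<\gamma$ or $\operatorname{cf}(\beta)<\theta$. $\mathrm{id}_p(\bar C,\bar J)$ is the ideal of those $A\subseteq\lambda$ for which there is a club $E\subseteq\lambda$ with $E\cap C_\delta\in J_\delta$ for all $\delta\in A\cap S$. *)

theory Defs
  imports Main
begin

text \<open>Ordinals below lambda are the elements of the field of a well-order r on a type 'a;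
  the ordinal delta is identified with its set of predecessors underS r delta.\<close>

definition cofinal :: "'a rel \<Rightarrow> 'a set \<Rightarrow> 'a set \<Rightarrow> bool" where
  "cofinal r A X \<longleftrightarrow> X \<subseteq> A \<and> (\<forall>\<alpha>\<in>A. \<exists>x\<in>X. (\<alpha>, x) \<in> r)"

definition cof :: "'a rel \<Rightarrow> 'a \<Rightarrow> 'a rel" where
  "cof r \<delta> = card_of (SOME X. cofinal r (underS r \<delta>) X \<and>
      (\<forall>Y. cofinal r (underS r \<delta>) Y \<longrightarrow> ordLeq2 (card_of X) (card_of Y)))"

definition isLimit :: "'a rel \<Rightarrow> 'a \<Rightarrow> bool" where
  "isLimit r \<beta> \<longleftrightarrow> \<beta> \<in> Field r \<and> underS r \<beta> \<noteq> {} \<and>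
      (\<forall>\<alpha>\<in>underS r \<beta>. \<exists>\<gamma>\<in>underS r \<beta>. \<alpha> \<in> underS r \<gamma>)"

definition club_in :: "'a rel \<Rightarrow> 'a set \<Rightarrow> 'a set \<Rightarrow> bool" where
  "club_in r A C \<longleftrightarrow> C \<subseteq> A \<and> (\<forall>\<alpha>\<in>A. \<exists>x\<in>C. (\<alpha>, x) \<in> r) \<and>
      (\<forall>\<gamma>\<in>A. isLimit r \<gamma> \<and> cofinal r (underS r \<gamma>) (C \<inter> underS r \<gamma>) \<longrightarrow> \<gamma> \<in> C)"

definition stationary :: "'a rel \<Rightarrow> 'a set \<Rightarrow> bool" where
  "stationary r S \<longleftrightarrow> S \<subseteq> Field r \<and> (\<forall>E. club_in r (Field r) E \<longrightarrow> S \<inter> E \<noteq> {})"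

definition nacc :: "'a rel \<Rightarrow> 'a set \<Rightarrow> 'a set" where
  "nacc r C = {x \<in> C. \<not> (isLimit r x \<and> cofinal r (underS r x) (C \<inter> underS r x))}"

text \<open>Membership of A in the ideal J^{b[mu]}_{C_delta}; mu is the ordinal m; cardinals theta < mu
  are represented by ordinals t < m (compared via card_of (underS r t)).\<close>
definition Jb :: "'a rel \<Rightarrow> 'a \<Rightarrow> 'a \<Rightarrow> 'a set \<Rightarrow> 'a set \<Rightarrow> bool" where
  "Jb r m \<delta> C A \<longleftrightarrow> A \<subseteq> C \<and>
     (\<exists>t\<in>underS r m. \<exists>\<gamma>\<in>underS r \<delta>. \<forall>\<beta>\<in>A \<inter> nacc r C.
         \<beta> \<in> underS r \<gamma> \<or> ordLess2 (cof r \<beta>) (card_of (underS r t)))"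

definition in_idp :: "'a rel \<Rightarrow> 'a set \<Rightarrow> ('a \<Rightarrow> 'a set) \<Rightarrow> ('a \<Rightarrow> 'a set \<Rightarrow> bool) \<Rightarrow> 'a set \<Rightarrow> bool" where
  "in_idp r S C J A \<longleftrightarrow> A \<subseteq> Field r \<and>
     (\<exists>E. club_in r (Field r) E \<and> (\<forall>\<delta>\<in>A \<inter> S. J \<delta> (E \<inter> C \<delta>)))"

definition is_cardinal :: "'a rel \<Rightarrow> 'a \<Rightarrow> bool" where
  "is_cardinal r t \<longleftrightarrow> t \<in> Field r \<and>
     (\<forall>x\<in>underS r t. ordLess2 (card_of (underS r x)) (card_of (underS r t)))"

end

theory Submission
  imports Defs
begin

unbundle cardinal_syntax

(* e_\<beta> is the closure below \<beta> of the union of an \<omega>-chain of sets: start with a cofinal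
  subset of \<beta> of size cf \<beta> together with the C^i_\<beta> for \<beta> \<in> S_i, and at each stage add C^i_\<delta>
  for every \<delta> \<in> S_i in the closure of the previous stage. There are \<kappa> indices and each C^i_\<delta> has
  order type \<kappa>, so every stage, and its closure, has size at most cf \<beta> + \<kappa> = cf \<beta> + cf \<mu>.
  A point \<delta> \<in> S_i of e_\<beta> that is not in the union is a limit of it; since cf \<delta> = \<kappa> > \<aleph>\<^sub>0 it is
  already a limit of a single stage, so C^i_\<delta> was added at the next one. *)

definition cof_set :: "'a rel \<Rightarrow> 'a \<Rightarrow> 'a set" where
  "cof_set r \<beta> = (SOME X. cofinal r (underS r \<beta>) X \<and>
      (\<forall>Y. cofinal r (underS r \<beta>) Y \<longrightarrow> |X| \<le>o |Y| ))"

lemma cof_eq_card_of_cof_set: "cof r \<beta> = |cof_set r \<beta>|"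
  unfolding cof_def cof_set_def ..

lemma cofinal_mono: "cofinal r A X \<Longrightarrow> X \<subseteq> Y \<Longrightarrow> Y \<subseteq> A \<Longrightarrow> cofinal r A Y"
  unfolding cofinal_def by blast

definition limit_points :: "'a rel \<Rightarrow> 'a set \<Rightarrow> 'a set" where
  "limit_points r X = {\<gamma>. isLimit r \<gamma> \<and> cofinal r (underS r \<gamma>) (X \<inter> underS r \<gamma>)}"

definition limit_closure :: "'a rel \<Rightarrow> 'a \<Rightarrow> 'a set \<Rightarrow> 'a set" where
  "limit_closure r \<beta> X = X \<union> (limit_points r X \<inter> underS r \<beta>)"

lemma limit_closure_subset: "X \<subseteq> underS r \<beta> \<Longrightarrow> limit_closure r \<beta> X \<subseteq> underS r \<beta>"
  unfolding limit_closure_def by blast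

context wo_rel
begin

lemma underS_trans_right: "a \<in> underS b \<Longrightarrow> (b, c) \<in> r \<Longrightarrow> a \<in> underS c"
  using underS_incr[OF TRANS ANTISYM] by blast

lemma underS_subset_underS: "\<delta> \<in> underS \<beta> \<Longrightarrow> underS \<delta> \<subseteq> underS \<beta>"
  using underS_incr[OF TRANS ANTISYM] unfolding underS_def by blast

lemma underS_cases: "a \<in> Field r \<Longrightarrow> b \<in> Field r \<Longrightarrow> a \<noteq> b \<Longrightarrow> a \<in> underS b \<or> b \<in> underS a"
  using TOTALS unfolding underS_def by blast

lemma cofinal_underS: "cofinal r (underS \<beta>) (underS \<beta>)"
  using REFL Order_Relation.underS_Field[of r \<beta>] unfolding cofinal_def refl_on_def by blast

lemma cof_set_spec:
  "cofinal r (underS \<beta>) (cof_set r \<beta>) \<and>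
     (\<forall>Y. cofinal r (underS \<beta>) Y \<longrightarrow> |cof_set r \<beta>| \<le>o |Y| )"
proof -
  let ?R = "card_of ` {Y. cofinal r (underS \<beta>) Y}"
  obtain X where "cofinal r (underS \<beta>) X" "\<forall>Y. cofinal r (underS \<beta>) Y \<longrightarrow> |X| \<le>o |Y|"
    using exists_minim_Card_order[of ?R] cofinal_underS card_of_Card_order by blast
  then show ?thesis
    unfolding cof_set_def by (rule someI[where P = "\<lambda>X. _ X \<and> _ X", OF conjI])
qed

lemma cof_set_cofinal: "cofinal r (underS \<beta>) (cof_set r \<beta>)"
  using cof_set_spec by blast

lemma cof_le_card_of_cofinal: "cofinal r (underS \<beta>) Y \<Longrightarrow> cof r \<beta> \<le>o |Y|"
  using cof_set_spec unfolding cof_eq_card_of_cof_set by blast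

lemma cofinal_UN_nat:
  fixes B :: "nat \<Rightarrow> 'a set"
  assumes cofinal: "cofinal r (underS \<delta>) ((\<Union>n. B n) \<inter> underS \<delta>)"
    and uncountable: "\<not> cof r \<delta> \<le>o |UNIV :: nat set|"
  shows "\<exists>n. cofinal r (underS \<delta>) (B n \<inter> underS \<delta>)"
proof (rule ccontr)
  assume "\<not> ?thesis"
  then have "\<forall>n. \<exists>\<alpha>\<in>underS \<delta>. \<forall>x\<in>B n \<inter> underS \<delta>. (\<alpha>, x) \<notin> r"
    unfolding cofinal_def by blast
  then obtain b where b: "\<And>n. b n \<in> underS \<delta>" "\<And>n x. x \<in> B n \<inter> underS \<delta> \<Longrightarrow> (b n, x) \<notin> r"
    by metis
  \<comment> \<open>b n bounds B n, so the countable set of the b n is cofinal\<close>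
  have "cofinal r (underS \<delta>) (range b)"
    unfolding cofinal_def
  proof (intro conjI ballI)
    show "range b \<subseteq> underS \<delta>" using b(1) by blast
    fix \<alpha> assume "\<alpha> \<in> underS \<delta>"
    then obtain x n where x: "x \<in> B n \<inter> underS \<delta>" "(\<alpha>, x) \<in> r"
      using cofinal unfolding cofinal_def by blast
    have "(x, b n) \<in> r"
      using TOTALS b x Order_Relation.underS_Field[of r \<delta>] by blast
    then show "\<exists>y\<in>range b. (\<alpha>, y) \<in> r"
      using x(2) TRANS unfolding trans_def by blast
  qed
  then have "cof r \<delta> \<le>o |range b|" by (rule cof_le_card_of_cofinal)
  then show False
    using uncountable card_of_image[of b UNIV] ordLeq_transitive by blast
qed

lemma limit_closure_UN_nat:
  fixes B :: "nat \<Rightarrow> 'a set"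
  assumes "\<delta> \<in> limit_closure r \<beta> (\<Union>n. B n)" and "\<not> cof r \<delta> \<le>o |UNIV :: nat set|"
  shows "\<exists>n. \<delta> \<in> limit_closure r \<beta> (B n)"
  using assms cofinal_UN_nat[where B = B and \<delta> = \<delta>] unfolding limit_closure_def limit_points_def by blast

lemma limit_points_between:
  assumes "\<gamma> \<in> limit_points r X" and "\<alpha> \<in> underS \<gamma>"
  obtains x where "x \<in> X" "\<alpha> \<in> underS x" "x \<in> underS \<gamma>"
proof -
  obtain \<gamma>' where "\<gamma>' \<in> underS \<gamma>" "\<alpha> \<in> underS \<gamma>'"
    using assms unfolding limit_points_def isLimit_def by blast
  then obtain x where "x \<in> X \<inter> underS \<gamma>" "(\<gamma>', x) \<in> r"
    using assms(1) unfolding limit_points_def cofinal_def by blast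
  then show thesis
    using that underS_trans_right[OF \<open>\<alpha> \<in> underS \<gamma>'\<close>] by blast
qed

lemma limit_points_limit_closure:
  "limit_points r (limit_closure r \<beta> X) \<subseteq> limit_points r X"
proof
  fix \<gamma> assume \<gamma>: "\<gamma> \<in> limit_points r (limit_closure r \<beta> X)"
  have "\<exists>y\<in>X \<inter> underS \<gamma>. (\<alpha>, y) \<in> r" if \<alpha>: "\<alpha> \<in> underS \<gamma>" for \<alpha>
  proof -
    obtain x where x: "x \<in> limit_closure r \<beta> X" "\<alpha> \<in> underS x" "x \<in> underS \<gamma>"
      using limit_points_between[OF \<gamma> \<alpha>] .
    then consider "x \<in> X" | "x \<in> limit_points r X"
      unfolding limit_closure_def by blast
    then obtain y where "y \<in> X" "\<alpha> \<in> underS y" "y \<in> underS \<gamma>"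
    proof cases
      case 1
      then show thesis using that x by blast
    next
      case 2
      then obtain y where "y \<in> X" "\<alpha> \<in> underS y" "y \<in> underS x"
        using limit_points_between[OF _ x(2)] by blast
      then show thesis using that underS_subset_underS[OF x(3)] by blast
    qed
    then show ?thesis unfolding underS_def by blast
  qed
  then show "\<gamma> \<in> limit_points r X"
    using \<gamma> unfolding limit_points_def cofinal_def by blast
qed

lemma club_in_limit_closure:
  assumes "X \<subseteq> underS \<beta>" and "cofinal r (underS \<beta>) X"
  shows "club_in r (underS \<beta>) (limit_closure r \<beta> X)"
  unfolding club_in_def
proof (intro conjI ballI impI)
  show "limit_closure r \<beta> X \<subseteq> underS \<beta>" using assms(1) by (rule limit_closure_subset)
  show "\<exists>x\<in>limit_closure r \<beta> X. (\<alpha>, x) \<in> r" if "\<alpha> \<in> underS \<beta>" for \<alpha>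
    using assms(2) that unfolding cofinal_def limit_closure_def by blast
  show "\<gamma> \<in> limit_closure r \<beta> X"
    if "\<gamma> \<in> underS \<beta>" "isLimit r \<gamma> \<and> cofinal r (underS \<gamma>) (limit_closure r \<beta> X \<inter> underS \<gamma>)"
    for \<gamma>
  proof -
    have "\<gamma> \<in> limit_points r (limit_closure r \<beta> X)"
      using that(2) unfolding limit_points_def by blast
    then have "\<gamma> \<in> limit_points r X"
      using limit_points_limit_closure by blast
    with that(1) show ?thesis
      unfolding limit_closure_def by blast
  qed
qed

lemma minim_above_neq:
  assumes "\<gamma>2 \<in> limit_points r X" "\<gamma>1 \<in> underS \<gamma>2" and y: "y \<in> X" "\<gamma>2 \<in> underS y"
  shows "minim {x \<in> X. \<gamma>1 \<in> underS x} \<noteq> y"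
proof
  assume min_eq: "minim {x \<in> X. \<gamma>1 \<in> underS x} = y"
  obtain x where x: "x \<in> X" "\<gamma>1 \<in> underS x" "x \<in> underS \<gamma>2"
    using limit_points_between[OF assms(1,2)] .
  have "(y, x) \<in> r"
    unfolding min_eq[symmetric] using x by (intro minim_least) (auto simp: underS_def Field_def)
  moreover have "x \<in> underS y"
    using underS_subset_underS[OF y(2)] x(3) by blast
  ultimately show False
    unfolding underS_def by (auto dest: antisymD[OF ANTISYM])
qed

lemma card_of_limit_points_le:
  assumes c: "Card_order c" "\<not> finite (Field c)" and X: "|X| \<le>o c"
  shows "|limit_points r X| \<le>o c"
proof -
  define above where "above \<gamma> = {x \<in> X. \<gamma> \<in> underS x}" for \<gamma>
  \<comment> \<open>an element of X lies between any two limit points, so this map is injective on them\<close>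
  define f where "f \<gamma> = (if above \<gamma> = {} then None else Some (minim (above \<gamma>)))" for \<gamma>
  have above_Field: "above \<gamma> \<subseteq> Field r" for \<gamma>
    unfolding above_def underS_def Field_def by blast
  have f_distinct: "f \<gamma>1 \<noteq> f \<gamma>2" if \<gamma>: "\<gamma>2 \<in> limit_points r X" "\<gamma>1 \<in> underS \<gamma>2" for \<gamma>1 \<gamma>2
  proof -
    obtain x where "x \<in> X" "\<gamma>1 \<in> underS x"
      using limit_points_between[OF \<gamma>] by blast
    then have ne: "above \<gamma>1 \<noteq> {}" unfolding above_def by blast
    show ?thesis
    proof (cases "above \<gamma>2 = {}")
      case True
      then show ?thesis using ne unfolding f_def by simp
    next
      case False
      then have "minim (above \<gamma>2) \<in> above \<gamma>2" by (rule minim_in[OF above_Field])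
      then have "minim (above \<gamma>1) \<noteq> minim (above \<gamma>2)"
        using minim_above_neq[OF \<gamma>] unfolding above_def by blast
      then show ?thesis using ne False unfolding f_def by simp
    qed
  qed
  have "inj_on f (limit_points r X)"
  proof (rule inj_onI, rule ccontr)
    fix \<gamma>1 \<gamma>2 assume \<gamma>: "\<gamma>1 \<in> limit_points r X" "\<gamma>2 \<in> limit_points r X" "f \<gamma>1 = f \<gamma>2" "\<gamma>1 \<noteq> \<gamma>2"
    then have "\<gamma>1 \<in> Field r" "\<gamma>2 \<in> Field r"
      unfolding limit_points_def isLimit_def by auto
    then have "\<gamma>1 \<in> underS \<gamma>2 \<or> \<gamma>2 \<in> underS \<gamma>1"
      using \<gamma>(4) by (rule underS_cases)
    then show False
      using f_distinct[OF \<gamma>(2)] f_distinct[OF \<gamma>(1)] \<gamma>(3) by auto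
  qed
  moreover have "f ` limit_points r X \<subseteq> {None} \<union> Some ` X"
    using minim_in[OF above_Field] unfolding f_def above_def by auto
  ultimately have "|limit_points r X| \<le>o |{None} \<union> Some ` X|"
    unfolding card_of_ordLeq[symmetric] by blast
  moreover have "|{None} \<union> Some ` X| \<le>o c"
  proof (rule card_of_Un_ordLeq_infinite_Field[OF c(2) _ _ c(1)])
    have "Field c \<noteq> {}" using c(2) by auto
    then show "|{None}| \<le>o c"
      by (rule ordLeq_ordIso_trans[OF card_of_singl_ordLeq card_of_Field_ordIso[OF c(1)]])
    show "|Some ` X| \<le>o c"
      using card_of_image X by (rule ordLeq_transitive)
  qed
  ultimately show ?thesis by (rule ordLeq_transitive)
qed

lemma card_of_limit_closure_le:
  assumes "Card_order c" "\<not> finite (Field c)" and "|X| \<le>o c"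
  shows "|limit_closure r \<beta> X| \<le>o c"
proof -
  have "|limit_points r X \<inter> underS \<beta>| \<le>o c"
    using card_of_mono1[OF Int_lower1] card_of_limit_points_le[OF assms] by (rule ordLeq_transitive)
  then show ?thesis
    unfolding limit_closure_def using assms by (intro card_of_Un_ordLeq_infinite_Field)
qed

lemma card_of_le_if_Restr_ordLeq:
  assumes "A \<subseteq> Field r" "B \<subseteq> Field r" and "Restr r A \<le>o Restr r B"
  shows "|A| \<le>o |B|"
  using card_of_mono2[OF assms(3)] Refl_Field_Restr2[OF REFL assms(1)] Refl_Field_Restr2[OF REFL assms(2)]
  by simp

end

locale coherent_closure = wo_rel r for r :: "'a rel" +
  fixes I :: "'i set" and S :: "'i \<Rightarrow> 'a set" and C :: "'i \<Rightarrow> 'a \<Rightarrow> 'a set"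
  assumes C_below: "i \<in> I \<Longrightarrow> \<delta> \<in> S i \<Longrightarrow> C i \<delta> \<subseteq> underS \<delta>"
begin

primrec stage :: "'a \<Rightarrow> nat \<Rightarrow> 'a set" where
  "stage \<beta> 0 = cof_set r \<beta> \<union> (\<Union>i\<in>{i \<in> I. \<beta> \<in> S i}. C i \<beta>)"
| "stage \<beta> (Suc n) = stage \<beta> n \<union> (\<Union>i\<in>I. \<Union>\<delta>\<in>limit_closure r \<beta> (stage \<beta> n) \<inter> S i. C i \<delta>)"

definition coherent_club :: "'a \<Rightarrow> 'a set" where
  "coherent_club \<beta> = limit_closure r \<beta> (\<Union>n. stage \<beta> n)"

lemma stage_subset_coherent_club: "stage \<beta> n \<subseteq> coherent_club \<beta>"
  unfolding coherent_club_def limit_closure_def by blast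

lemma stage_subset_underS: "stage \<beta> n \<subseteq> underS \<beta>"
proof (induction n)
  case 0
  show ?case
    using cof_set_cofinal[of \<beta>] C_below unfolding cofinal_def by auto
next
  case (Suc n)
  then have "limit_closure r \<beta> (stage \<beta> n) \<subseteq> underS \<beta>"
    by (rule limit_closure_subset)
  then show ?case
    using Suc C_below underS_subset_underS by fastforce
qed

lemma club_in_coherent_club: "club_in r (underS \<beta>) (coherent_club \<beta>)"
  unfolding coherent_club_def
proof (rule club_in_limit_closure)
  show "(\<Union>n. stage \<beta> n) \<subseteq> underS \<beta>"
    using stage_subset_underS by blast
  then show "cofinal r (underS \<beta>) (\<Union>n. stage \<beta> n)"
    by (rule cofinal_mono[OF cof_set_cofinal, rotated]) (auto intro!: exI[where x = 0])
qed

lemma card_of_coherent_club_le: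
  assumes c: "Card_order c" "\<not> finite (Field c)"
    and I: "|I| \<le>o c" and cof: "cof r \<beta> \<le>o c"
    and C: "\<And>i \<delta>. i \<in> I \<Longrightarrow> \<delta> \<in> S i \<Longrightarrow> |C i \<delta>| \<le>o c"
  shows "|coherent_club \<beta>| \<le>o c"
proof -
  note UN = card_of_UNION_ordLeq_infinite_Field[OF c(2,1)]
  have sub_I: "|{i \<in> I. P i}| \<le>o c" for P
    using card_of_mono1[of "{i \<in> I. P i}" I] I ordLeq_transitive by blast
  have "|stage \<beta> n| \<le>o c" for n
  proof (induction n)
    case 0
    have "|\<Union>i\<in>{i \<in> I. \<beta> \<in> S i}. C i \<beta>| \<le>o c"
      using C by (intro UN[OF sub_I]) auto
    then show ?case
      using cof c by (simp add: cof_eq_card_of_cof_set card_of_Un_ordLeq_infinite_Field)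
  next
    case (Suc n)
    have "|limit_closure r \<beta> (stage \<beta> n) \<inter> S i| \<le>o c" for i
      using card_of_mono1[OF Int_lower1] card_of_limit_closure_le[OF c Suc]
      by (rule ordLeq_transitive)
    then have "|\<Union>i\<in>I. \<Union>\<delta>\<in>limit_closure r \<beta> (stage \<beta> n) \<inter> S i. C i \<delta>| \<le>o c"
      using C by (intro UN[OF I] ballI UN) auto
    then show ?case
      using Suc c by (simp add: card_of_Un_ordLeq_infinite_Field)
  qed
  moreover have "|UNIV :: nat set| \<le>o c"
    using infinite_iff_card_of_nat[THEN iffD1, OF c(2)] card_of_Field_ordIso[OF c(1)]
    by (rule ordLeq_ordIso_trans)
  ultimately have "|\<Union>n. stage \<beta> n| \<le>o c"
    by (intro UN ballI)
  then show ?thesis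
    unfolding coherent_club_def by (rule card_of_limit_closure_le[OF c])
qed

lemma C_subset_coherent_club:
  assumes i: "i \<in> I" "\<delta> \<in> S i" and uncountable: "\<not> cof r \<delta> \<le>o |UNIV :: nat set|"
    and \<delta>: "\<delta> \<in> coherent_club \<beta> \<union> {\<beta>}"
  shows "C i \<delta> \<subseteq> coherent_club \<beta>"
proof (cases "\<delta> = \<beta>")
  case True
  then have "C i \<delta> \<subseteq> stage \<beta> 0" using i by auto
  then show ?thesis using stage_subset_coherent_club by blast
next
  case False
  then have "\<delta> \<in> limit_closure r \<beta> (\<Union>n. stage \<beta> n)"
    using \<delta> unfolding coherent_club_def by blast
  then obtain n where "\<delta> \<in> limit_closure r \<beta> (stage \<beta> n)"
    using limit_closure_UN_nat[OF _ uncountable] by blast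
  then have "C i \<delta> \<subseteq> stage \<beta> (Suc n)" using i by auto
  then show ?thesis using stage_subset_coherent_club by blast
qed

end

theorem claim3p2:
  fixes r :: "'a rel" and m k :: 'a
    and S :: "'a \<Rightarrow> 'a set" and C :: "'a \<Rightarrow> 'a \<Rightarrow> 'a set"
  assumes wo: "Well_order r"
    and mu_card: "is_cardinal r m"
    and lam: "ordIso2 r (cardSuc (card_of (underS r m)))"
    and kappa_card: "is_cardinal r k"
    and kappa_cf: "ordIso2 (card_of (underS r k)) (cof r m)"
    and kappa_unc: "ordLess2 (card_of (UNIV :: nat set)) (card_of (underS r k))"
    and kappa_lt: "k \<in> underS r m"
    and S_disj: "\<forall>i\<in>underS r k. \<forall>j\<in>underS r k. i \<noteq> j \<longrightarrow> S i \<inter> S j = {}"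
    and S_stat: "\<forall>i\<in>underS r k. stationary r (S i)"
    and S_cf: "\<forall>i\<in>underS r k. \<forall>\<delta>\<in>S i. \<delta> \<in> Field r \<and> ordIso2 (cof r \<delta>) (card_of (underS r k))"
    and C_club: "\<forall>i\<in>underS r k. \<forall>\<delta>\<in>S i. club_in r (underS r \<delta>) (C i \<delta>)"
    and C_idp: "\<forall>i\<in>underS r k. \<not> in_idp r (S i) (C i) (\<lambda>\<delta>. Jb r m \<delta> (C i \<delta>)) (Field r)"
    and C_otp: "\<forall>i\<in>underS r k. \<forall>\<delta>\<in>S i. ordIso2 (Restr r (C i \<delta>)) (Restr r (underS r k))"
  shows "\<exists>e :: 'a \<Rightarrow> 'a set.
           (\<forall>\<beta>. isLimit r \<beta> \<longrightarrow> club_in r (underS r \<beta>) (e \<beta>) \<and>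
                 ordLeq2 (card_of (e \<beta>)) (BNF_Cardinal_Arithmetic.csum (cof r \<beta>) (cof r m))) \<and>
           (\<forall>i\<in>underS r k. \<forall>\<beta>. isLimit r \<beta> \<longrightarrow>
                 (\<forall>\<delta>\<in>S i \<inter> (e \<beta> \<union> {\<beta>}). C i \<delta> \<subseteq> e \<beta>))"
proof -
  let ?K = "underS r k"
  interpret coherent_closure r ?K S C
    using wo C_club unfolding coherent_closure_def coherent_closure_axioms_def wo_rel_def club_in_def
    by blast
  have C_card: "|C i \<delta>| \<le>o |?K|" if "i \<in> ?K" "\<delta> \<in> S i" for i \<delta>
    using C_below[OF that] C_otp that Order_Relation.underS_Field[of r k] Order_Relation.underS_Field[of r \<delta>]
    by (intro card_of_le_if_Restr_ordLeq ordIso_imp_ordLeq) blast+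
  have uncountable: "\<not> cof r \<delta> \<le>o |UNIV :: nat set|" if "i \<in> ?K" "\<delta> \<in> S i" for i \<delta>
    using S_cf that ordLess_ordIso_trans[OF kappa_unc ordIso_symmetric] not_ordLess_ordLeq by blast
  have bound: "|coherent_club \<beta>| \<le>o cof r \<beta> +c cof r m" for \<beta>
  proof (rule card_of_coherent_club_le)
    have Card_cof: "Card_order (cof r \<alpha>)" for \<alpha>
      unfolding cof_eq_card_of_cof_set by (rule card_of_Card_order)
    show K: "|?K| \<le>o cof r \<beta> +c cof r m"
      using kappa_cf ordLeq_csum2[OF Card_cof] by (rule ordIso_ordLeq_trans)
    show "Card_order (cof r \<beta> +c cof r m)" by (rule Card_order_csum)
    have "\<not> finite ?K"
      using card_of_ordLeq_infinite[OF ordLess_imp_ordLeq[OF kappa_unc] infinite_UNIV_nat] .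
    then show "\<not> finite (Field (cof r \<beta> +c cof r m))"
      using cinfinite_mono[OF K] unfolding cinfinite_def Field_card_of by blast
    show "cof r \<beta> \<le>o cof r \<beta> +c cof r m" by (rule ordLeq_csum1[OF Card_cof])
    show "|C i \<delta>| \<le>o cof r \<beta> +c cof r m" if "i \<in> ?K" "\<delta> \<in> S i" for i \<delta>
      using C_card[OF that] K by (rule ordLeq_transitive)
  qed
  show ?thesis
    using club_in_coherent_club bound C_subset_coherent_club[OF _ _ uncountable] by blast
qed

end
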